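(* For each $k$ with $0\leq k\leq 4$, the edge set of $Q_8$ can be partitioned into the edge set of a DVOP$[k]$ in $Q_8$ and the edge sets of $4-k$ Hamiltonian cycles (copies of $C_{256}$) of $Q_8$.
   Context: $Q_8$ denotes the $8$-dimensional hypercube graph (vertices are $8$-tuples of $0$'s and $1$'s, adjacent iff they differ in exactly one coordinate). $C_N$ is the cycle on $N$ vertices. $P_k$ is the path with vertices $0,1,\dots,k$ and edges $\hat{j}$ joining $j-1$ and $j$. For a graph $G$, a DVOP$[k]$ is a family $\{p_v\}_{v\in V(G)}$ of embeddings $p_v:P_k\to G$ such that (a) $p_v(\hat{j})=p_{v'}(\hat{j'})$ implies $v=v'$ and $j=j'$, and (b) $p_v(0)=v$ for every $v$; its edge set is the union of the edge images of all $p_v$. *)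

theory Defs
  imports Main
begin

text \<open>Simple graphs are given by a vertex set V and a symmetric irreflexive
adjacency relation adj; an (undirected) edge is the two-element set {u,v}.\<close>

definition Q8_verts :: "bool list set" where
  "Q8_verts = {xs. length xs = 8}"

definition Q8_adj :: "bool list \<Rightarrow> bool list \<Rightarrow> bool" where
  "Q8_adj xs ys \<longleftrightarrow> length xs = 8 \<and> length ys = 8 \<and>
     card {i. i < 8 \<and> xs ! i \<noteq> ys ! i} = 1"

definition graph_edges :: "'a set \<Rightarrow> ('a \<Rightarrow> 'a \<Rightarrow> bool) \<Rightarrow> 'a set set" where
  "graph_edges V adj = {{u, v} | u v. u \<in> V \<and> v \<in> V \<and> adj u v}"

definition path_embedding :: "'a set \<Rightarrow> ('a \<Rightarrow> 'a \<Rightarrow> bool) \<Rightarrow> nat \<Rightarrow> (nat \<Rightarrow> 'a) \<Rightarrow> bool" where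
  "path_embedding V adj k f \<longleftrightarrow> (\<forall>j\<le>k. f j \<in> V) \<and> inj_on f {0..k} \<and>
     (\<forall>j\<in>{1..k}. adj (f (j - 1)) (f j))"

definition path_edge :: "(nat \<Rightarrow> 'a) \<Rightarrow> nat \<Rightarrow> 'a set" where
  "path_edge f j = {f (j - 1), f j}"

definition is_DVOP :: "'a set \<Rightarrow> ('a \<Rightarrow> 'a \<Rightarrow> bool) \<Rightarrow> nat \<Rightarrow> ('a \<Rightarrow> nat \<Rightarrow> 'a) \<Rightarrow> bool" where
  "is_DVOP V adj k p \<longleftrightarrow>
     (\<forall>v\<in>V. path_embedding V adj k (p v) \<and> p v 0 = v) \<and>
     (\<forall>v\<in>V. \<forall>v'\<in>V. \<forall>j\<in>{1..k}. \<forall>j'\<in>{1..k}.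
        path_edge (p v) j = path_edge (p v') j' \<longrightarrow> v = v' \<and> j = j')"

definition DVOP_edges :: "'a set \<Rightarrow> nat \<Rightarrow> ('a \<Rightarrow> nat \<Rightarrow> 'a) \<Rightarrow> 'a set set" where
  "DVOP_edges V k p = {path_edge (p v) j | v j. v \<in> V \<and> j \<in> {1..k}}"

definition hamiltonian_cycle :: "'a set \<Rightarrow> ('a \<Rightarrow> 'a \<Rightarrow> bool) \<Rightarrow> 'a set set \<Rightarrow> bool" where
  "hamiltonian_cycle V adj H \<longleftrightarrow> (\<exists>c. bij_betw c {..<card V} V \<and>
     (\<forall>i<card V. adj (c i) (c ((i + 1) mod card V))) \<and>
     H = {{c i, c ((i + 1) mod card V)} | i. i < card V})"

end

theory Submission
  imports Defs
begin

text \<open>\<open>Q\<^sub>8\<close> is 8-regular with 1024 edges, and it splits into four Hamiltonian cycles. Orient each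
  cycle and regard it as a cyclic permutation \<open>\<sigma>\<^sub>s\<close> of the vertices, so that every edge of
  \<open>Q\<^sub>8\<close> is an arc \<open>{v, \<sigma>\<^sub>s v}\<close> for exactly one pair \<open>(v, s)\<close>. Following \<open>\<sigma>\<^bsub>4-k\<^esub>, \<dots>, \<sigma>\<^sub>3\<close>
  in turn from each vertex \<open>v\<close> gives a walk of length \<open>k\<close> whose \<open>j\<close>-th edge is an arc of
  \<open>\<sigma>\<^bsub>4-k+j-1\<^esub>\<close>; as each \<open>\<sigma>\<^sub>s\<close> is a bijection, every such arc is the \<open>j\<close>-th edge of exactly
  one walk. So whenever these walks are paths they form a DVOP[k] whose edges are those of the
  last \<open>k\<close> cycles, and the first \<open>4 - k\<close> cycles complete the partition. A suitable oriented
  decomposition of \<open>Q\<^sub>8\<close> is given by an explicit table and checked by computation; it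
  suffices to check that the walks for \<open>k = 4\<close> are paths, as for smaller \<open>k\<close> the walks are
  their suffixes.\<close>

definition arc_edges :: "'a set \<Rightarrow> ('a \<Rightarrow> 'a) \<Rightarrow> 'a set set" where
  "arc_edges V f = (\<lambda>v. {v, f v}) ` V"

definition hamiltonian_orbit :: "'a set \<Rightarrow> ('a \<Rightarrow> 'a) \<Rightarrow> 'a \<Rightarrow> bool" where
  "hamiltonian_orbit V f x \<longleftrightarrow> x \<in> V \<and> f ` V \<subseteq> V \<and>
     (\<forall>i. 0 < i \<and> i < card V \<longrightarrow> (f ^^ i) x \<noteq> x) \<and> (f ^^ card V) x = x"

lemma funpow_in_closed: "f ` V \<subseteq> V \<Longrightarrow> x \<in> V \<Longrightarrow> (f ^^ i) x \<in> V"
  by (induction i) auto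

lemma hamiltonian_orbit_inj_on:
  assumes orbit: "hamiltonian_orbit V f x"
  shows "inj_on (\<lambda>i. (f ^^ i) x) {..<card V}"
proof (rule linorder_inj_onI')
  fix i j assume "i \<in> {..<card V}" "j \<in> {..<card V}" "i < j"
  show "(f ^^ i) x \<noteq> (f ^^ j) x"
  proof
    assume eq: "(f ^^ i) x = (f ^^ j) x"
    have "(f ^^ (card V - j + i)) x = (f ^^ (card V - j + j)) x"
      using eq by (simp add: funpow_add)
    also have "\<dots> = (f ^^ card V) x"
      using \<open>j \<in> {..<card V}\<close> by simp
    also have "\<dots> = x"
      using orbit by (simp add: hamiltonian_orbit_def)
    finally show False
      using orbit \<open>i < j\<close> \<open>j \<in> {..<card V}\<close> by (simp add: hamiltonian_orbit_def)
  qed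
qed

lemma hamiltonian_orbit_bij_betw:
  assumes "finite V" and orbit: "hamiltonian_orbit V f x"
  shows "bij_betw (\<lambda>i. (f ^^ i) x) {..<card V} V"
proof -
  have sub: "(\<lambda>i. (f ^^ i) x) ` {..<card V} \<subseteq> V"
    using orbit by (auto simp: hamiltonian_orbit_def intro: funpow_in_closed)
  have "card ((\<lambda>i. (f ^^ i) x) ` {..<card V}) = card V"
    using hamiltonian_orbit_inj_on[OF orbit] by (simp add: card_image)
  then show ?thesis
    using hamiltonian_orbit_inj_on[OF orbit] card_subset_eq[OF \<open>finite V\<close> sub]
    by (simp add: bij_betw_def)
qed

lemma hamiltonian_orbit_step:
  assumes orbit: "hamiltonian_orbit V f x" and "i < card V"
  shows "f ((f ^^ i) x) = (f ^^ ((i + 1) mod card V)) x"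
proof (cases "i + 1 < card V")
  case True
  then show ?thesis by simp
next
  case False
  then have "Suc i = card V" using \<open>i < card V\<close> by simp
  have "f ((f ^^ i) x) = (f ^^ Suc i) x" by simp
  then show ?thesis
    using orbit \<open>Suc i = card V\<close> by (simp add: hamiltonian_orbit_def)
qed

lemma hamiltonian_orbit_bij:
  assumes "finite V" and orbit: "hamiltonian_orbit V f x"
  shows "bij_betw f V V"
proof -
  have enum: "(\<lambda>i. (f ^^ i) x) ` {..<card V} = V"
    using hamiltonian_orbit_bij_betw[OF assms] by (simp add: bij_betw_def)
  have "V \<subseteq> f ` V"
  proof
    fix v assume "v \<in> V"
    then obtain i where i: "i < card V" "v = (f ^^ i) x" using enum by auto
    define j where "j = (i + card V - 1) mod card V"
    have "j < card V" "(j + 1) mod card V = i"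
      using i(1) by (auto simp: j_def mod_Suc_eq)
    then have "v = f ((f ^^ j) x)"
      using hamiltonian_orbit_step[OF orbit] i by simp
    then show "v \<in> f ` V" using enum \<open>j < card V\<close> by auto
  qed
  moreover have "f ` V \<subseteq> V" using orbit by (simp add: hamiltonian_orbit_def)
  ultimately show ?thesis
    using finite_surj_inj[OF \<open>finite V\<close>] by (auto simp: bij_betw_def)
qed

lemma hamiltonian_cycle_arc_edges:
  assumes "finite V" and orbit: "hamiltonian_orbit V f x" and adj: "\<And>v. v \<in> V \<Longrightarrow> adj v (f v)"
  shows "hamiltonian_cycle V adj (arc_edges V f)"
  unfolding hamiltonian_cycle_def
proof (intro exI conjI allI impI)
  let ?c = "\<lambda>i. (f ^^ i) x"
  show bij: "bij_betw ?c {..<card V} V"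
    using assms(1) orbit by (rule hamiltonian_orbit_bij_betw)
  have step: "?c ((i + 1) mod card V) = f (?c i)" if "i < card V" for i
    using hamiltonian_orbit_step[OF orbit that] by simp
  have in_V: "?c i \<in> V" if "i < card V" for i
    using bij that by (auto simp: bij_betw_def)
  show "adj (?c i) (?c ((i + 1) mod card V))" if "i < card V" for i
    using adj in_V step that by simp
  have "arc_edges V f = (\<lambda>v. {v, f v}) ` (?c ` {..<card V})"
    using bij by (simp add: arc_edges_def bij_betw_def)
  also have "\<dots> = {{?c i, ?c ((i + 1) mod card V)} | i. i < card V}"
    using step by auto
  finally show "arc_edges V f = {{?c i, ?c ((i + 1) mod card V)} | i. i < card V}" .
qed

fun returns_after :: "('a \<Rightarrow> 'a) \<Rightarrow> 'a \<Rightarrow> 'a \<Rightarrow> nat \<Rightarrow> bool" where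
  "returns_after f x y 0 \<longleftrightarrow> y = x"
| "returns_after f x y (Suc n) \<longleftrightarrow> y \<noteq> x \<and> returns_after f x (f y) n"

lemma returns_after_iff: "returns_after f x y n \<longleftrightarrow> (\<forall>i<n. (f ^^ i) y \<noteq> x) \<and> (f ^^ n) y = x"
proof (induction n arbitrary: y)
  case 0
  then show ?case by simp
next
  case (Suc n)
  have "(\<forall>i<Suc n. (f ^^ i) y \<noteq> x) \<longleftrightarrow> y \<noteq> x \<and> (\<forall>i<n. (f ^^ i) (f y) \<noteq> x)"
    by (auto simp: less_Suc_eq_0_disj funpow_swap1)
  then show ?case using Suc by (simp add: funpow_swap1)
qed

lemma returns_after_numeral:
  "returns_after f x y (numeral k) \<longleftrightarrow> y \<noteq> x \<and> returns_after f x (f y) (pred_numeral k)"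
  by (simp add: numeral_eq_Suc)

lemma hamiltonian_orbitI:
  assumes "x \<in> V" "f ` V \<subseteq> V" "card V = Suc n" "returns_after f x (f x) n"
  shows "hamiltonian_orbit V f x"
proof -
  have "(f ^^ i) (f x) = (f ^^ Suc i) x" for i
    by (simp only: funpow_Suc_right comp_apply)
  then have no_return: "\<forall>i<n. (f ^^ Suc i) x \<noteq> x" and return: "(f ^^ Suc n) x = x"
    using assms(4) by (simp_all add: returns_after_iff)
  have "(f ^^ i) x \<noteq> x" if "0 < i" "i < Suc n" for i
    using no_return that by (cases i) auto
  then show ?thesis
    using assms return by (simp add: hamiltonian_orbit_def)
qed

fun walk :: "(nat \<Rightarrow> 'a \<Rightarrow> 'a) \<Rightarrow> 'a \<Rightarrow> nat \<Rightarrow> 'a" where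
  "walk \<sigma> v 0 = v"
| "walk \<sigma> v (Suc j) = \<sigma> j (walk \<sigma> v j)"

lemma walk_numeral: "walk \<sigma> v (numeral k) = \<sigma> (pred_numeral k) (walk \<sigma> v (pred_numeral k))"
  by (simp add: numeral_eq_Suc)

lemma walk_add: "walk \<sigma> v (m + j) = walk (\<lambda>i. \<sigma> (m + i)) (walk \<sigma> v m) j"
  by (induction j) simp_all

lemma bij_betw_walk:
  assumes "\<And>j. j < m \<Longrightarrow> bij_betw (\<sigma> j) V V"
  shows "bij_betw (\<lambda>v. walk \<sigma> v m) V V"
  using assms
proof (induction m)
  case 0
  then show ?case by (simp add: id_def[symmetric])
next
  case (Suc m)
  then have "bij_betw (\<sigma> m \<circ> (\<lambda>v. walk \<sigma> v m)) V V"
    by (intro bij_betw_trans) auto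
  then show ?case by (simp add: comp_def)
qed

lemma path_edge_walk: "path_edge (walk \<sigma> v) (Suc j) = {walk \<sigma> v j, \<sigma> j (walk \<sigma> v j)}"
  by (simp add: path_edge_def)

lemma inj_on_walk_suffix:
  assumes bij: "\<And>j. j < m \<Longrightarrow> bij_betw (\<sigma> j) V V"
    and walk_inj: "\<And>w. w \<in> V \<Longrightarrow> inj_on (walk \<sigma> w) {0..m + k}"
    and "v \<in> V"
  shows "inj_on (walk (\<lambda>j. \<sigma> (m + j)) v) {0..k}"
proof -
  obtain w where "w \<in> V" "v = walk \<sigma> w m"
    using bij_betw_walk[of m \<sigma> V] bij \<open>v \<in> V\<close> by (fastforce simp: bij_betw_def)
  then have "walk (\<lambda>j. \<sigma> (m + j)) v = walk \<sigma> w \<circ> (\<lambda>j. m + j)"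
    by (simp add: walk_add comp_def)
  moreover have "inj_on (walk \<sigma> w) ((\<lambda>j. m + j) ` {0..k})"
    by (rule inj_on_subset[OF walk_inj[OF \<open>w \<in> V\<close>]]) auto
  ultimately show ?thesis by (simp add: comp_inj_on)
qed

lemma is_DVOP_walk:
  assumes bij: "\<And>j. j < k \<Longrightarrow> bij_betw (\<sigma> j) V V"
    and adj: "\<And>j v. j < k \<Longrightarrow> v \<in> V \<Longrightarrow> adj v (\<sigma> j v)"
    and arcs_inj: "\<And>i j v w. i < k \<Longrightarrow> j < k \<Longrightarrow> v \<in> V \<Longrightarrow> w \<in> V \<Longrightarrow>
      {v, \<sigma> i v} = {w, \<sigma> j w} \<Longrightarrow> v = w \<and> i = j"
    and walk_inj: "\<And>v. v \<in> V \<Longrightarrow> inj_on (walk \<sigma> v) {0..k}"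
  shows "is_DVOP V adj k (walk \<sigma>)"
proof -
  have bij_walk: "bij_betw (\<lambda>v. walk \<sigma> v j) V V" if "j \<le> k" for j
    using bij that by (intro bij_betw_walk) auto
  have walk_in: "walk \<sigma> v j \<in> V" if "v \<in> V" "j \<le> k" for v j
    using bij_walk[OF that(2)] that(1) by (auto simp: bij_betw_def)
  have "path_embedding V adj k (walk \<sigma> v)" if "v \<in> V" for v
    unfolding path_embedding_def
  proof (intro conjI allI impI ballI)
    show "walk \<sigma> v j \<in> V" if "j \<le> k" for j using walk_in \<open>v \<in> V\<close> that .
    show "inj_on (walk \<sigma> v) {0..k}" using walk_inj \<open>v \<in> V\<close> .
    show "adj (walk \<sigma> v (j - 1)) (walk \<sigma> v j)" if "j \<in> {1..k}" for j
      using that adj[of "j - 1" "walk \<sigma> v (j - 1)"] walk_in[OF \<open>v \<in> V\<close>, of "j - 1"]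
      by (cases j) auto
  qed
  moreover have "v = v' \<and> j = j'"
    if V: "v \<in> V" "v' \<in> V" and j: "j \<in> {1..k}" "j' \<in> {1..k}"
      and eq: "path_edge (walk \<sigma> v) j = path_edge (walk \<sigma> v') j'" for v v' j j'
  proof -
    obtain a b where ab: "j = Suc a" "j' = Suc b" "a < k" "b < k"
      using j by (cases j; cases j') auto
    have "walk \<sigma> v a = walk \<sigma> v' b \<and> a = b"
      using eq ab V walk_in by (intro arcs_inj) (auto simp: path_edge_walk)
    moreover have "inj_on (\<lambda>v. walk \<sigma> v a) V"
      using bij_walk[of a] ab by (simp add: bij_betw_def)
    ultimately show ?thesis
      using ab V by (auto dest: inj_onD)
  qed
  ultimately show ?thesis by (auto simp: is_DVOP_def)
qed

lemma DVOP_edges_walk: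
  assumes bij: "\<And>j. j < k \<Longrightarrow> bij_betw (\<sigma> j) V V"
  shows "DVOP_edges V k (walk \<sigma>) = (\<Union>j<k. arc_edges V (\<sigma> j))"
proof (intro set_eqI iffI)
  have walk_onto: "(\<lambda>v. walk \<sigma> v j) ` V = V" if "j < k" for j
    using bij_betw_walk[of j \<sigma> V] bij that by (simp add: bij_betw_def)
  fix e
  show "e \<in> (\<Union>j<k. arc_edges V (\<sigma> j))" if e: "e \<in> DVOP_edges V k (walk \<sigma>)"
  proof -
    obtain v j where "v \<in> V" "j \<in> {1..k}" "e = path_edge (walk \<sigma> v) j"
      using e by (auto simp: DVOP_edges_def)
    moreover obtain a where "j = Suc a"
      using \<open>j \<in> {1..k}\<close> by (cases j) auto
    ultimately have a: "a < k" "e = {walk \<sigma> v a, \<sigma> a (walk \<sigma> v a)}"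
      by (auto simp: path_edge_walk)
    moreover have "walk \<sigma> v a \<in> V"
      using walk_onto[OF \<open>a < k\<close>] \<open>v \<in> V\<close> by blast
    ultimately show ?thesis by (auto simp: arc_edges_def)
  qed
  show "e \<in> DVOP_edges V k (walk \<sigma>)" if e: "e \<in> (\<Union>j<k. arc_edges V (\<sigma> j))"
  proof -
    obtain a w where "a < k" "w \<in> V" "e = {w, \<sigma> a w}"
      using e by (auto simp: arc_edges_def)
    moreover obtain v where "v \<in> V" "w = walk \<sigma> v a"
      using walk_onto[OF \<open>a < k\<close>] \<open>w \<in> V\<close> by auto
    ultimately have "e = path_edge (walk \<sigma> v) (Suc a)" "Suc a \<in> {1..k}"
      by (auto simp: path_edge_walk)
    then show ?thesis using \<open>v \<in> V\<close> by (auto simp: DVOP_edges_def)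
  qed
qed

lemma is_DVOP_walk_last:
  assumes "k \<le> n"
    and bij: "\<And>s. s < n \<Longrightarrow> bij_betw (\<sigma> s) V V"
    and adj: "\<And>s v. s < n \<Longrightarrow> v \<in> V \<Longrightarrow> adj v (\<sigma> s v)"
    and arcs_inj: "\<And>s t v w. s < n \<Longrightarrow> t < n \<Longrightarrow> v \<in> V \<Longrightarrow> w \<in> V \<Longrightarrow>
      {v, \<sigma> s v} = {w, \<sigma> t w} \<Longrightarrow> v = w \<and> s = t"
    and walk_inj: "\<And>v. v \<in> V \<Longrightarrow> inj_on (walk \<sigma> v) {0..n}"
  shows "is_DVOP V adj k (walk (\<lambda>j. \<sigma> (n - k + j)))"
proof (rule is_DVOP_walk)
  show "bij_betw (\<sigma> (n - k + j)) V V" if "j < k" for j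
    using that \<open>k \<le> n\<close> by (auto intro: bij)
  show "adj v (\<sigma> (n - k + j) v)" if "j < k" "v \<in> V" for j v
    using that \<open>k \<le> n\<close> by (auto intro: adj)
  show "v = w \<and> i = j"
    if "i < k" "j < k" "v \<in> V" "w \<in> V" "{v, \<sigma> (n - k + i) v} = {w, \<sigma> (n - k + j) w}" for i j v w
  proof -
    have "n - k + i < n" "n - k + j < n" using that(1,2) \<open>k \<le> n\<close> by auto
    then show ?thesis using arcs_inj[of "n - k + i" "n - k + j" v w] that(3-5) by simp
  qed
  show "inj_on (walk (\<lambda>j. \<sigma> (n - k + j)) v) {0..k}" if "v \<in> V" for v
  proof (rule inj_on_walk_suffix[OF _ _ that])
    show "bij_betw (\<sigma> j) V V" if "j < n - k" for j
      using that by (auto intro: bij)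
    show "inj_on (walk \<sigma> w) {0..n - k + k}" if "w \<in> V" for w
      using walk_inj that \<open>k \<le> n\<close> by simp
  qed
qed

lemma DVOP_edges_walk_last:
  assumes "k \<le> n" and bij: "\<And>s. s < n \<Longrightarrow> bij_betw (\<sigma> s) V V"
  shows "DVOP_edges V k (walk (\<lambda>j. \<sigma> (n - k + j))) = (\<Union>s\<in>{n - k..<n}. arc_edges V (\<sigma> s))"
proof -
  have "DVOP_edges V k (walk (\<lambda>j. \<sigma> (n - k + j))) = (\<Union>j<k. arc_edges V (\<sigma> (n - k + j)))"
    using \<open>k \<le> n\<close> by (intro DVOP_edges_walk) (auto intro: bij)
  also have "\<dots> = (\<Union>s\<in>(\<lambda>j. n - k + j) ` {..<k}. arc_edges V (\<sigma> s))"
    by simp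
  also have "(\<lambda>j. n - k + j) ` {..<k} = {n - k..<n}"
    using \<open>k \<le> n\<close> by (simp only: lessThan_atLeast0 image_add_atLeastLessThan) simp
  finally show ?thesis .
qed

theorem DVOP_hamiltonian_decomposition:
  assumes "finite V" "k \<le> n"
    and orbit: "\<And>s. s < n \<Longrightarrow> hamiltonian_orbit V (\<sigma> s) x"
    and adj: "\<And>s v. s < n \<Longrightarrow> v \<in> V \<Longrightarrow> adj v (\<sigma> s v)"
    and arcs_inj: "\<And>s t v w. s < n \<Longrightarrow> t < n \<Longrightarrow> v \<in> V \<Longrightarrow> w \<in> V \<Longrightarrow>
      {v, \<sigma> s v} = {w, \<sigma> t w} \<Longrightarrow> v = w \<and> s = t"
    and arcs_cover: "(\<Union>s<n. arc_edges V (\<sigma> s)) = graph_edges V adj"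
    and walk_inj: "\<And>v. v \<in> V \<Longrightarrow> inj_on (walk \<sigma> v) {0..n}"
  shows "\<exists>p H. is_DVOP V adj k p \<and>
    (\<forall>i < n - k. hamiltonian_cycle V adj (H i)) \<and>
    (\<forall>i < n - k. DVOP_edges V k p \<inter> H i = {}) \<and>
    (\<forall>i < n - k. \<forall>j < n - k. i \<noteq> j \<longrightarrow> H i \<inter> H j = {}) \<and>
    DVOP_edges V k p \<union> (\<Union>i < n - k. H i) = graph_edges V adj"
proof -
  have bij: "bij_betw (\<sigma> s) V V" if "s < n" for s
    using hamiltonian_orbit_bij[OF \<open>finite V\<close> orbit[OF that]] .
  have DVOP_edges_eq:
    "DVOP_edges V k (walk (\<lambda>j. \<sigma> (n - k + j))) = (\<Union>s\<in>{n - k..<n}. arc_edges V (\<sigma> s))"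
    using \<open>k \<le> n\<close> bij by (rule DVOP_edges_walk_last)
  have arc_index_unique: "s = t"
    if "e \<in> arc_edges V (\<sigma> s)" "e \<in> arc_edges V (\<sigma> t)" "s < n" "t < n" for e s t
    using that arcs_inj by (auto simp: arc_edges_def)
  define H where "H i = arc_edges V (\<sigma> i)" for i
  show ?thesis
  proof (intro exI[of _ "walk (\<lambda>j. \<sigma> (n - k + j))"] exI[of _ H] conjI allI impI)
    show "is_DVOP V adj k (walk (\<lambda>j. \<sigma> (n - k + j)))"
      using \<open>k \<le> n\<close> bij adj arcs_inj walk_inj by (rule is_DVOP_walk_last)
    fix i assume "i < n - k"
    show "hamiltonian_cycle V adj (H i)"
      using \<open>i < n - k\<close> unfolding H_def
      by (intro hamiltonian_cycle_arc_edges[OF \<open>finite V\<close> orbit]) (auto intro: adj)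
    show "DVOP_edges V k (walk (\<lambda>j. \<sigma> (n - k + j))) \<inter> H i = {}"
      unfolding DVOP_edges_eq H_def using \<open>i < n - k\<close> by (auto dest: arc_index_unique)
    fix j assume "j < n - k" "i \<noteq> j"
    then show "H i \<inter> H j = {}"
      using \<open>i < n - k\<close> by (auto simp: H_def dest: arc_index_unique)
  next
    have "{..<n} = {n - k..<n} \<union> {..<n - k}" by auto
    then show "DVOP_edges V k (walk (\<lambda>j. \<sigma> (n - k + j))) \<union> (\<Union>i < n - k. H i) = graph_edges V adj"
      unfolding DVOP_edges_eq H_def arcs_cover[symmetric] by (simp only: UN_Un)
  qed
qed

definition flip_bit :: "bool list \<Rightarrow> nat \<Rightarrow> bool list" where
  "flip_bit v d = v[d := \<not> v ! d]"

lemma length_flip_bit [simp]: "length (flip_bit v d) = length v"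
  by (simp add: flip_bit_def)

lemma flip_bit_flip_bit [simp]: "flip_bit (flip_bit v d) d = v"
  by (cases "d < length v") (simp_all add: flip_bit_def list_update_beyond)

lemma flip_bit_inj:
  assumes "d < length v" "d' < length v" "flip_bit v d = flip_bit v d'"
  shows "d = d'"
proof (rule ccontr)
  assume "d \<noteq> d'"
  then have "flip_bit v d ! d \<noteq> flip_bit v d' ! d"
    using assms(1,2) by (simp add: flip_bit_def)
  then show False using assms(3) by simp
qed

lemma Q8_adj_iff_flip_bit: "Q8_adj v w \<longleftrightarrow> length v = 8 \<and> (\<exists>d<8. w = flip_bit v d)"
proof
  assume "Q8_adj v w"
  then have len: "length v = 8" "length w = 8" and "card {i. i < 8 \<and> v ! i \<noteq> w ! i} = 1"
    by (simp_all add: Q8_adj_def)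
  then obtain d where d: "{i. i < 8 \<and> v ! i \<noteq> w ! i} = {d}"
    by (auto simp: card_Suc_eq)
  then have "d < 8" "v ! d \<noteq> w ! d" and agree: "\<And>i. i < 8 \<Longrightarrow> i \<noteq> d \<Longrightarrow> v ! i = w ! i"
    by (auto simp: set_eq_iff)
  moreover have "w = flip_bit v d"
  proof (rule nth_equalityI)
    show "length w = length (flip_bit v d)" using len by simp
    show "w ! i = flip_bit v d ! i" if "i < length w" for i
      using len that \<open>v ! d \<noteq> w ! d\<close> agree[of i] by (cases "i = d") (auto simp: flip_bit_def)
  qed
  ultimately show "length v = 8 \<and> (\<exists>d<8. w = flip_bit v d)" using len by auto
next
  assume "length v = 8 \<and> (\<exists>d<8. w = flip_bit v d)"
  then obtain d where "length v = 8" "d < 8" "w = flip_bit v d" by auto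
  moreover from this have "{i. i < 8 \<and> v ! i \<noteq> w ! i} = {d}"
    by (auto simp: flip_bit_def nth_list_update)
  ultimately show "Q8_adj v w" by (simp add: Q8_adj_def)
qed

lemma finite_Q8_verts: "finite Q8_verts"
  using finite_lists_length_eq[of "UNIV :: bool set" 8] by (simp add: Q8_verts_def)

lemma card_Q8_verts: "card Q8_verts = 256"
  using card_lists_length_eq[of "UNIV :: bool set" 8] by (simp add: Q8_verts_def)

lemma Ball_Q8_verts: "(\<forall>v\<in>Q8_verts. P v) \<longleftrightarrow> list_all P (List.n_lists 8 [False, True])"
  by (simp add: list_all_iff set_n_lists Q8_verts_def flip: UNIV_bool)

lemma n_lists_numeral:
  "List.n_lists (numeral k) xs = concat (map (\<lambda>ys. map (\<lambda>y. y # ys) xs) (List.n_lists (pred_numeral k) xs))"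
  by (simp add: numeral_eq_Suc)

text \<open>Entry \<open>n\<close> of the table belongs to the vertex whose bits, first bit least significant,
  spell \<open>n\<close> in binary; it lists the coordinates flipped when leaving that vertex along the
  oriented Hamiltonian cycles number 0, 1, 2, 3.\<close>

definition Q8_dir_table :: "nat list list" where
  "Q8_dir_table =
    [[1,4,6,3], [5,2,0,1], [5,4,2,6], [3,2,0,7], [2,7,4,6], [0,7,4,6], [0,7,1,3], [1,3,4,6],
     [0,6,5,7], [3,2,6,4], [1,3,2,4], [0,1,5,6], [5,2,4,3], [4,5,0,3], [1,7,4,0], [7,2,1,4],
     [0,2,3,6], [3,4,7,6], [1,3,5,7], [0,4,6,1], [1,3,5,7], [0,5,2,3], [7,4,2,6], [5,2,0,1],
     [1,6,4,5], [7,1,5,0], [6,2,0,7], [3,2,4,5], [7,2,5,6], [0,2,1,7], [6,3,5,1], [6,3,5,0],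
     [2,5,0,7], [7,6,4,2], [1,4,0,2], [5,3,4,1], [0,5,1,7], [6,7,5,1], [5,3,4,6], [0,2,5,7],
     [6,2,4,3], [2,3,5,0], [1,5,3,0], [6,1,4,7], [1,6,0,3], [7,3,4,6], [0,5,2,7], [2,3,5,1],
     [1,3,4,5], [0,5,2,3], [6,2,3,0], [1,3,5,7], [1,6,4,2], [0,3,4,7], [7,3,0,5], [1,2,4,6],
     [7,2,6,1], [0,7,4,6], [0,4,5,7], [1,7,6,2], [0,3,4,7], [1,2,5,6], [6,2,4,1], [0,3,6,4],
     [0,5,4,3], [1,3,2,6], [2,5,3,1], [0,2,6,4], [4,2,1,7], [1,5,0,7], [5,7,3,6], [7,5,4,0],
     [0,5,2,1], [1,2,5,7], [7,2,6,4], [0,3,7,2], [0,3,5,6], [1,3,4,6], [6,1,7,5], [6,4,3,0],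
     [7,2,5,1], [0,2,4,5], [0,2,4,6], [3,1,5,7], [0,3,7,6], [4,6,7,5], [0,4,1,7], [5,2,1,6],
     [0,3,4,5], [3,2,6,4], [1,3,2,7], [6,4,0,1], [4,1,2,7], [0,6,5,3], [4,5,3,0], [1,7,2,3],
     [4,6,1,7], [0,5,4,1], [0,2,3,6], [6,3,5,7], [5,6,0,2], [3,4,2,7], [0,3,1,4], [6,2,3,1],
     [1,7,3,0], [6,2,4,3], [7,5,4,6], [1,2,5,0], [3,4,0,2], [1,4,7,5], [1,2,7,6], [0,5,6,7],
     [0,6,1,2], [1,3,2,6], [4,3,5,7], [6,3,4,0], [3,4,1,5], [3,7,0,6], [5,2,0,6], [1,2,4,7],
     [7,3,4,1], [0,5,7,1], [6,5,2,7], [0,5,4,7], [6,2,5,1], [2,1,7,0], [0,3,4,7], [2,3,5,4],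
     [1,3,5,7], [4,3,7,0], [2,4,3,7], [1,0,4,5], [0,4,2,1], [1,6,5,2], [3,0,6,4], [2,3,4,7],
     [4,2,5,6], [0,4,1,7], [0,5,1,7], [5,3,4,7], [3,7,0,6], [7,4,2,3], [4,2,0,1], [1,2,5,6],
     [4,6,7,0], [2,5,3,6], [1,2,3,6], [3,1,0,7], [5,0,2,6], [7,5,4,1], [0,3,1,5], [7,2,3,6],
     [7,3,2,6], [2,1,5,0], [4,6,1,0], [6,2,5,7], [3,5,4,1], [6,0,3,1], [7,2,5,6], [7,5,0,4],
     [1,6,4,3], [0,3,5,4], [0,7,5,3], [4,3,1,7], [1,2,5,6], [0,1,4,2], [0,7,5,2], [3,2,5,4],
     [0,7,4,2], [5,6,1,7], [7,1,2,6], [0,2,6,4], [5,1,3,7], [3,5,0,2], [4,3,5,0], [6,7,4,1],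
     [0,2,7,5], [6,7,1,3], [5,1,4,7], [5,2,0,6], [6,4,1,7], [6,3,2,0], [0,6,4,2], [1,5,6,7],
     [0,5,2,3], [1,6,4,2], [5,3,4,1], [0,3,6,2], [4,1,3,6], [0,4,5,7], [0,3,2,7], [1,7,3,6],
     [7,6,5,1], [0,6,4,7], [2,7,5,6], [1,0,6,7], [5,2,0,6], [3,4,1,2], [1,3,5,0], [5,4,2,6],
     [7,2,3,1], [0,3,4,6], [3,0,4,6], [3,4,1,6], [5,0,3,7], [1,2,7,6], [4,2,1,6], [0,3,7,2],
     [2,0,5,4], [1,3,7,5], [7,5,4,1], [0,4,2,6], [1,4,3,5], [2,0,3,6], [5,2,6,4], [1,7,0,3],
     [1,4,3,7], [0,2,7,6], [5,2,3,0], [1,5,3,7], [4,2,1,6], [5,0,4,7], [5,3,0,7], [6,4,2,1],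
     [3,2,0,4], [7,6,5,3], [1,6,4,7], [1,0,6,5], [1,0,3,7], [5,2,1,6], [2,0,7,6], [2,3,6,7],
     [6,1,5,2], [5,7,0,2], [0,4,5,3], [5,3,1,7], [1,6,4,7], [3,0,6,5], [6,3,2,5], [1,2,5,0],
     [6,2,0,7], [1,7,2,4], [6,1,3,2], [0,5,4,7], [7,3,4,0], [1,3,4,5], [7,0,1,4], [5,2,3,4],
     [3,6,5,4], [4,3,0,5], [0,6,2,1], [1,2,3,4], [5,2,7,0], [1,4,6,2], [1,4,3,6], [5,0,4,7]]"

definition Q8_dirs :: "bool list \<Rightarrow> nat list" where
  "Q8_dirs v = Q8_dir_table ! foldr (\<lambda>b n. of_bool b + 2 * n) v 0"

text \<open>Evaluation rewrites with these equations; indexing the list instead is much slower.\<close>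

lemma Q8_dirs_table:
  "Q8_dirs [False,False,False,False,False,False,False,False] = [1,4,6,3]"
  "Q8_dirs [True,False,False,False,False,False,False,False] = [5,2,0,1]"
  "Q8_dirs [False,True,False,False,False,False,False,False] = [5,4,2,6]"
  "Q8_dirs [True,True,False,False,False,False,False,False] = [3,2,0,7]"
  "Q8_dirs [False,False,True,False,False,False,False,False] = [2,7,4,6]"
  "Q8_dirs [True,False,True,False,False,False,False,False] = [0,7,4,6]"
  "Q8_dirs [False,True,True,False,False,False,False,False] = [0,7,1,3]"
  "Q8_dirs [True,True,True,False,False,False,False,False] = [1,3,4,6]"
  "Q8_dirs [False,False,False,True,False,False,False,False] = [0,6,5,7]"
  "Q8_dirs [True,False,False,True,False,False,False,False] = [3,2,6,4]"
  "Q8_dirs [False,True,False,True,False,False,False,False] = [1,3,2,4]"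
  "Q8_dirs [True,True,False,True,False,False,False,False] = [0,1,5,6]"
  "Q8_dirs [False,False,True,True,False,False,False,False] = [5,2,4,3]"
  "Q8_dirs [True,False,True,True,False,False,False,False] = [4,5,0,3]"
  "Q8_dirs [False,True,True,True,False,False,False,False] = [1,7,4,0]"
  "Q8_dirs [True,True,True,True,False,False,False,False] = [7,2,1,4]"
  "Q8_dirs [False,False,False,False,True,False,False,False] = [0,2,3,6]"
  "Q8_dirs [True,False,False,False,True,False,False,False] = [3,4,7,6]"
  "Q8_dirs [False,True,False,False,True,False,False,False] = [1,3,5,7]"
  "Q8_dirs [True,True,False,False,True,False,False,False] = [0,4,6,1]"
  "Q8_dirs [False,False,True,False,True,False,False,False] = [1,3,5,7]"
  "Q8_dirs [True,False,True,False,True,False,False,False] = [0,5,2,3]"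
  "Q8_dirs [False,True,True,False,True,False,False,False] = [7,4,2,6]"
  "Q8_dirs [True,True,True,False,True,False,False,False] = [5,2,0,1]"
  "Q8_dirs [False,False,False,True,True,False,False,False] = [1,6,4,5]"
  "Q8_dirs [True,False,False,True,True,False,False,False] = [7,1,5,0]"
  "Q8_dirs [False,True,False,True,True,False,False,False] = [6,2,0,7]"
  "Q8_dirs [True,True,False,True,True,False,False,False] = [3,2,4,5]"
  "Q8_dirs [False,False,True,True,True,False,False,False] = [7,2,5,6]"
  "Q8_dirs [True,False,True,True,True,False,False,False] = [0,2,1,7]"
  "Q8_dirs [False,True,True,True,True,False,False,False] = [6,3,5,1]"
  "Q8_dirs [True,True,True,True,True,False,False,False] = [6,3,5,0]"
  "Q8_dirs [False,False,False,False,False,True,False,False] = [2,5,0,7]"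
  "Q8_dirs [True,False,False,False,False,True,False,False] = [7,6,4,2]"
  "Q8_dirs [False,True,False,False,False,True,False,False] = [1,4,0,2]"
  "Q8_dirs [True,True,False,False,False,True,False,False] = [5,3,4,1]"
  "Q8_dirs [False,False,True,False,False,True,False,False] = [0,5,1,7]"
  "Q8_dirs [True,False,True,False,False,True,False,False] = [6,7,5,1]"
  "Q8_dirs [False,True,True,False,False,True,False,False] = [5,3,4,6]"
  "Q8_dirs [True,True,True,False,False,True,False,False] = [0,2,5,7]"
  "Q8_dirs [False,False,False,True,False,True,False,False] = [6,2,4,3]"
  "Q8_dirs [True,False,False,True,False,True,False,False] = [2,3,5,0]"
  "Q8_dirs [False,True,False,True,False,True,False,False] = [1,5,3,0]"
  "Q8_dirs [True,True,False,True,False,True,False,False] = [6,1,4,7]"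
  "Q8_dirs [False,False,True,True,False,True,False,False] = [1,6,0,3]"
  "Q8_dirs [True,False,True,True,False,True,False,False] = [7,3,4,6]"
  "Q8_dirs [False,True,True,True,False,True,False,False] = [0,5,2,7]"
  "Q8_dirs [True,True,True,True,False,True,False,False] = [2,3,5,1]"
  "Q8_dirs [False,False,False,False,True,True,False,False] = [1,3,4,5]"
  "Q8_dirs [True,False,False,False,True,True,False,False] = [0,5,2,3]"
  "Q8_dirs [False,True,False,False,True,True,False,False] = [6,2,3,0]"
  "Q8_dirs [True,True,False,False,True,True,False,False] = [1,3,5,7]"
  "Q8_dirs [False,False,True,False,True,True,False,False] = [1,6,4,2]"
  "Q8_dirs [True,False,True,False,True,True,False,False] = [0,3,4,7]"
  "Q8_dirs [False,True,True,False,True,True,False,False] = [7,3,0,5]"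
  "Q8_dirs [True,True,True,False,True,True,False,False] = [1,2,4,6]"
  "Q8_dirs [False,False,False,True,True,True,False,False] = [7,2,6,1]"
  "Q8_dirs [True,False,False,True,True,True,False,False] = [0,7,4,6]"
  "Q8_dirs [False,True,False,True,True,True,False,False] = [0,4,5,7]"
  "Q8_dirs [True,True,False,True,True,True,False,False] = [1,7,6,2]"
  "Q8_dirs [False,False,True,True,True,True,False,False] = [0,3,4,7]"
  "Q8_dirs [True,False,True,True,True,True,False,False] = [1,2,5,6]"
  "Q8_dirs [False,True,True,True,True,True,False,False] = [6,2,4,1]"
  "Q8_dirs [True,True,True,True,True,True,False,False] = [0,3,6,4]"
  "Q8_dirs [False,False,False,False,False,False,True,False] = [0,5,4,3]"
  "Q8_dirs [True,False,False,False,False,False,True,False] = [1,3,2,6]"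
  "Q8_dirs [False,True,False,False,False,False,True,False] = [2,5,3,1]"
  "Q8_dirs [True,True,False,False,False,False,True,False] = [0,2,6,4]"
  "Q8_dirs [False,False,True,False,False,False,True,False] = [4,2,1,7]"
  "Q8_dirs [True,False,True,False,False,False,True,False] = [1,5,0,7]"
  "Q8_dirs [False,True,True,False,False,False,True,False] = [5,7,3,6]"
  "Q8_dirs [True,True,True,False,False,False,True,False] = [7,5,4,0]"
  "Q8_dirs [False,False,False,True,False,False,True,False] = [0,5,2,1]"
  "Q8_dirs [True,False,False,True,False,False,True,False] = [1,2,5,7]"
  "Q8_dirs [False,True,False,True,False,False,True,False] = [7,2,6,4]"
  "Q8_dirs [True,True,False,True,False,False,True,False] = [0,3,7,2]"
  "Q8_dirs [False,False,True,True,False,False,True,False] = [0,3,5,6]"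
  "Q8_dirs [True,False,True,True,False,False,True,False] = [1,3,4,6]"
  "Q8_dirs [False,True,True,True,False,False,True,False] = [6,1,7,5]"
  "Q8_dirs [True,True,True,True,False,False,True,False] = [6,4,3,0]"
  "Q8_dirs [False,False,False,False,True,False,True,False] = [7,2,5,1]"
  "Q8_dirs [True,False,False,False,True,False,True,False] = [0,2,4,5]"
  "Q8_dirs [False,True,False,False,True,False,True,False] = [0,2,4,6]"
  "Q8_dirs [True,True,False,False,True,False,True,False] = [3,1,5,7]"
  "Q8_dirs [False,False,True,False,True,False,True,False] = [0,3,7,6]"
  "Q8_dirs [True,False,True,False,True,False,True,False] = [4,6,7,5]"
  "Q8_dirs [False,True,True,False,True,False,True,False] = [0,4,1,7]"
  "Q8_dirs [True,True,True,False,True,False,True,False] = [5,2,1,6]"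
  "Q8_dirs [False,False,False,True,True,False,True,False] = [0,3,4,5]"
  "Q8_dirs [True,False,False,True,True,False,True,False] = [3,2,6,4]"
  "Q8_dirs [False,True,False,True,True,False,True,False] = [1,3,2,7]"
  "Q8_dirs [True,True,False,True,True,False,True,False] = [6,4,0,1]"
  "Q8_dirs [False,False,True,True,True,False,True,False] = [4,1,2,7]"
  "Q8_dirs [True,False,True,True,True,False,True,False] = [0,6,5,3]"
  "Q8_dirs [False,True,True,True,True,False,True,False] = [4,5,3,0]"
  "Q8_dirs [True,True,True,True,True,False,True,False] = [1,7,2,3]"
  "Q8_dirs [False,False,False,False,False,True,True,False] = [4,6,1,7]"
  "Q8_dirs [True,False,False,False,False,True,True,False] = [0,5,4,1]"
  "Q8_dirs [False,True,False,False,False,True,True,False] = [0,2,3,6]"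
  "Q8_dirs [True,True,False,False,False,True,True,False] = [6,3,5,7]"
  "Q8_dirs [False,False,True,False,False,True,True,False] = [5,6,0,2]"
  "Q8_dirs [True,False,True,False,False,True,True,False] = [3,4,2,7]"
  "Q8_dirs [False,True,True,False,False,True,True,False] = [0,3,1,4]"
  "Q8_dirs [True,True,True,False,False,True,True,False] = [6,2,3,1]"
  "Q8_dirs [False,False,False,True,False,True,True,False] = [1,7,3,0]"
  "Q8_dirs [True,False,False,True,False,True,True,False] = [6,2,4,3]"
  "Q8_dirs [False,True,False,True,False,True,True,False] = [7,5,4,6]"
  "Q8_dirs [True,True,False,True,False,True,True,False] = [1,2,5,0]"
  "Q8_dirs [False,False,True,True,False,True,True,False] = [3,4,0,2]"
  "Q8_dirs [True,False,True,True,False,True,True,False] = [1,4,7,5]"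
  "Q8_dirs [False,True,True,True,False,True,True,False] = [1,2,7,6]"
  "Q8_dirs [True,True,True,True,False,True,True,False] = [0,5,6,7]"
  "Q8_dirs [False,False,False,False,True,True,True,False] = [0,6,1,2]"
  "Q8_dirs [True,False,False,False,True,True,True,False] = [1,3,2,6]"
  "Q8_dirs [False,True,False,False,True,True,True,False] = [4,3,5,7]"
  "Q8_dirs [True,True,False,False,True,True,True,False] = [6,3,4,0]"
  "Q8_dirs [False,False,True,False,True,True,True,False] = [3,4,1,5]"
  "Q8_dirs [True,False,True,False,True,True,True,False] = [3,7,0,6]"
  "Q8_dirs [False,True,True,False,True,True,True,False] = [5,2,0,6]"
  "Q8_dirs [True,True,True,False,True,True,True,False] = [1,2,4,7]"
  "Q8_dirs [False,False,False,True,True,True,True,False] = [7,3,4,1]"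
  "Q8_dirs [True,False,False,True,True,True,True,False] = [0,5,7,1]"
  "Q8_dirs [False,True,False,True,True,True,True,False] = [6,5,2,7]"
  "Q8_dirs [True,True,False,True,True,True,True,False] = [0,5,4,7]"
  "Q8_dirs [False,False,True,True,True,True,True,False] = [6,2,5,1]"
  "Q8_dirs [True,False,True,True,True,True,True,False] = [2,1,7,0]"
  "Q8_dirs [False,True,True,True,True,True,True,False] = [0,3,4,7]"
  "Q8_dirs [True,True,True,True,True,True,True,False] = [2,3,5,4]"
  "Q8_dirs [False,False,False,False,False,False,False,True] = [1,3,5,7]"
  "Q8_dirs [True,False,False,False,False,False,False,True] = [4,3,7,0]"
  "Q8_dirs [False,True,False,False,False,False,False,True] = [2,4,3,7]"
  "Q8_dirs [True,True,False,False,False,False,False,True] = [1,0,4,5]"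
  "Q8_dirs [False,False,True,False,False,False,False,True] = [0,4,2,1]"
  "Q8_dirs [True,False,True,False,False,False,False,True] = [1,6,5,2]"
  "Q8_dirs [False,True,True,False,False,False,False,True] = [3,0,6,4]"
  "Q8_dirs [True,True,True,False,False,False,False,True] = [2,3,4,7]"
  "Q8_dirs [False,False,False,True,False,False,False,True] = [4,2,5,6]"
  "Q8_dirs [True,False,False,True,False,False,False,True] = [0,4,1,7]"
  "Q8_dirs [False,True,False,True,False,False,False,True] = [0,5,1,7]"
  "Q8_dirs [True,True,False,True,False,False,False,True] = [5,3,4,7]"
  "Q8_dirs [False,False,True,True,False,False,False,True] = [3,7,0,6]"
  "Q8_dirs [True,False,True,True,False,False,False,True] = [7,4,2,3]"
  "Q8_dirs [False,True,True,True,False,False,False,True] = [4,2,0,1]"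
  "Q8_dirs [True,True,True,True,False,False,False,True] = [1,2,5,6]"
  "Q8_dirs [False,False,False,False,True,False,False,True] = [4,6,7,0]"
  "Q8_dirs [True,False,False,False,True,False,False,True] = [2,5,3,6]"
  "Q8_dirs [False,True,False,False,True,False,False,True] = [1,2,3,6]"
  "Q8_dirs [True,True,False,False,True,False,False,True] = [3,1,0,7]"
  "Q8_dirs [False,False,True,False,True,False,False,True] = [5,0,2,6]"
  "Q8_dirs [True,False,True,False,True,False,False,True] = [7,5,4,1]"
  "Q8_dirs [False,True,True,False,True,False,False,True] = [0,3,1,5]"
  "Q8_dirs [True,True,True,False,True,False,False,True] = [7,2,3,6]"
  "Q8_dirs [False,False,False,True,True,False,False,True] = [7,3,2,6]"
  "Q8_dirs [True,False,False,True,True,False,False,True] = [2,1,5,0]"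
  "Q8_dirs [False,True,False,True,True,False,False,True] = [4,6,1,0]"
  "Q8_dirs [True,True,False,True,True,False,False,True] = [6,2,5,7]"
  "Q8_dirs [False,False,True,True,True,False,False,True] = [3,5,4,1]"
  "Q8_dirs [True,False,True,True,True,False,False,True] = [6,0,3,1]"
  "Q8_dirs [False,True,True,True,True,False,False,True] = [7,2,5,6]"
  "Q8_dirs [True,True,True,True,True,False,False,True] = [7,5,0,4]"
  "Q8_dirs [False,False,False,False,False,True,False,True] = [1,6,4,3]"
  "Q8_dirs [True,False,False,False,False,True,False,True] = [0,3,5,4]"
  "Q8_dirs [False,True,False,False,False,True,False,True] = [0,7,5,3]"
  "Q8_dirs [True,True,False,False,False,True,False,True] = [4,3,1,7]"
  "Q8_dirs [False,False,True,False,False,True,False,True] = [1,2,5,6]"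
  "Q8_dirs [True,False,True,False,False,True,False,True] = [0,1,4,2]"
  "Q8_dirs [False,True,True,False,False,True,False,True] = [0,7,5,2]"
  "Q8_dirs [True,True,True,False,False,True,False,True] = [3,2,5,4]"
  "Q8_dirs [False,False,False,True,False,True,False,True] = [0,7,4,2]"
  "Q8_dirs [True,False,False,True,False,True,False,True] = [5,6,1,7]"
  "Q8_dirs [False,True,False,True,False,True,False,True] = [7,1,2,6]"
  "Q8_dirs [True,True,False,True,False,True,False,True] = [0,2,6,4]"
  "Q8_dirs [False,False,True,True,False,True,False,True] = [5,1,3,7]"
  "Q8_dirs [True,False,True,True,False,True,False,True] = [3,5,0,2]"
  "Q8_dirs [False,True,True,True,False,True,False,True] = [4,3,5,0]"
  "Q8_dirs [True,True,True,True,False,True,False,True] = [6,7,4,1]"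
  "Q8_dirs [False,False,False,False,True,True,False,True] = [0,2,7,5]"
  "Q8_dirs [True,False,False,False,True,True,False,True] = [6,7,1,3]"
  "Q8_dirs [False,True,False,False,True,True,False,True] = [5,1,4,7]"
  "Q8_dirs [True,True,False,False,True,True,False,True] = [5,2,0,6]"
  "Q8_dirs [False,False,True,False,True,True,False,True] = [6,4,1,7]"
  "Q8_dirs [True,False,True,False,True,True,False,True] = [6,3,2,0]"
  "Q8_dirs [False,True,True,False,True,True,False,True] = [0,6,4,2]"
  "Q8_dirs [True,True,True,False,True,True,False,True] = [1,5,6,7]"
  "Q8_dirs [False,False,False,True,True,True,False,True] = [0,5,2,3]"
  "Q8_dirs [True,False,False,True,True,True,False,True] = [1,6,4,2]"
  "Q8_dirs [False,True,False,True,True,True,False,True] = [5,3,4,1]"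
  "Q8_dirs [True,True,False,True,True,True,False,True] = [0,3,6,2]"
  "Q8_dirs [False,False,True,True,True,True,False,True] = [4,1,3,6]"
  "Q8_dirs [True,False,True,True,True,True,False,True] = [0,4,5,7]"
  "Q8_dirs [False,True,True,True,True,True,False,True] = [0,3,2,7]"
  "Q8_dirs [True,True,True,True,True,True,False,True] = [1,7,3,6]"
  "Q8_dirs [False,False,False,False,False,False,True,True] = [7,6,5,1]"
  "Q8_dirs [True,False,False,False,False,False,True,True] = [0,6,4,7]"
  "Q8_dirs [False,True,False,False,False,False,True,True] = [2,7,5,6]"
  "Q8_dirs [True,True,False,False,False,False,True,True] = [1,0,6,7]"
  "Q8_dirs [False,False,True,False,False,False,True,True] = [5,2,0,6]"
  "Q8_dirs [True,False,True,False,False,False,True,True] = [3,4,1,2]"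
  "Q8_dirs [False,True,True,False,False,False,True,True] = [1,3,5,0]"
  "Q8_dirs [True,True,True,False,False,False,True,True] = [5,4,2,6]"
  "Q8_dirs [False,False,False,True,False,False,True,True] = [7,2,3,1]"
  "Q8_dirs [True,False,False,True,False,False,True,True] = [0,3,4,6]"
  "Q8_dirs [False,True,False,True,False,False,True,True] = [3,0,4,6]"
  "Q8_dirs [True,True,False,True,False,False,True,True] = [3,4,1,6]"
  "Q8_dirs [False,False,True,True,False,False,True,True] = [5,0,3,7]"
  "Q8_dirs [True,False,True,True,False,False,True,True] = [1,2,7,6]"
  "Q8_dirs [False,True,True,True,False,False,True,True] = [4,2,1,6]"
  "Q8_dirs [True,True,True,True,False,False,True,True] = [0,3,7,2]"
  "Q8_dirs [False,False,False,False,True,False,True,True] = [2,0,5,4]"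
  "Q8_dirs [True,False,False,False,True,False,True,True] = [1,3,7,5]"
  "Q8_dirs [False,True,False,False,True,False,True,True] = [7,5,4,1]"
  "Q8_dirs [True,True,False,False,True,False,True,True] = [0,4,2,6]"
  "Q8_dirs [False,False,True,False,True,False,True,True] = [1,4,3,5]"
  "Q8_dirs [True,False,True,False,True,False,True,True] = [2,0,3,6]"
  "Q8_dirs [False,True,True,False,True,False,True,True] = [5,2,6,4]"
  "Q8_dirs [True,True,True,False,True,False,True,True] = [1,7,0,3]"
  "Q8_dirs [False,False,False,True,True,False,True,True] = [1,4,3,7]"
  "Q8_dirs [True,False,False,True,True,False,True,True] = [0,2,7,6]"
  "Q8_dirs [False,True,False,True,True,False,True,True] = [5,2,3,0]"
  "Q8_dirs [True,True,False,True,True,False,True,True] = [1,5,3,7]"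
  "Q8_dirs [False,False,True,True,True,False,True,True] = [4,2,1,6]"
  "Q8_dirs [True,False,True,True,True,False,True,True] = [5,0,4,7]"
  "Q8_dirs [False,True,True,True,True,False,True,True] = [5,3,0,7]"
  "Q8_dirs [True,True,True,True,True,False,True,True] = [6,4,2,1]"
  "Q8_dirs [False,False,False,False,False,True,True,True] = [3,2,0,4]"
  "Q8_dirs [True,False,False,False,False,True,True,True] = [7,6,5,3]"
  "Q8_dirs [False,True,False,False,False,True,True,True] = [1,6,4,7]"
  "Q8_dirs [True,True,False,False,False,True,True,True] = [1,0,6,5]"
  "Q8_dirs [False,False,True,False,False,True,True,True] = [1,0,3,7]"
  "Q8_dirs [True,False,True,False,False,True,True,True] = [5,2,1,6]"
  "Q8_dirs [False,True,True,False,False,True,True,True] = [2,0,7,6]"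
  "Q8_dirs [True,True,True,False,False,True,True,True] = [2,3,6,7]"
  "Q8_dirs [False,False,False,True,False,True,True,True] = [6,1,5,2]"
  "Q8_dirs [True,False,False,True,False,True,True,True] = [5,7,0,2]"
  "Q8_dirs [False,True,False,True,False,True,True,True] = [0,4,5,3]"
  "Q8_dirs [True,True,False,True,False,True,True,True] = [5,3,1,7]"
  "Q8_dirs [False,False,True,True,False,True,True,True] = [1,6,4,7]"
  "Q8_dirs [True,False,True,True,False,True,True,True] = [3,0,6,5]"
  "Q8_dirs [False,True,True,True,False,True,True,True] = [6,3,2,5]"
  "Q8_dirs [True,True,True,True,False,True,True,True] = [1,2,5,0]"
  "Q8_dirs [False,False,False,False,True,True,True,True] = [6,2,0,7]"
  "Q8_dirs [True,False,False,False,True,True,True,True] = [1,7,2,4]"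
  "Q8_dirs [False,True,False,False,True,True,True,True] = [6,1,3,2]"
  "Q8_dirs [True,True,False,False,True,True,True,True] = [0,5,4,7]"
  "Q8_dirs [False,False,True,False,True,True,True,True] = [7,3,4,0]"
  "Q8_dirs [True,False,True,False,True,True,True,True] = [1,3,4,5]"
  "Q8_dirs [False,True,True,False,True,True,True,True] = [7,0,1,4]"
  "Q8_dirs [True,True,True,False,True,True,True,True] = [5,2,3,4]"
  "Q8_dirs [False,False,False,True,True,True,True,True] = [3,6,5,4]"
  "Q8_dirs [True,False,False,True,True,True,True,True] = [4,3,0,5]"
  "Q8_dirs [False,True,False,True,True,True,True,True] = [0,6,2,1]"
  "Q8_dirs [True,True,False,True,True,True,True,True] = [1,2,3,4]"
  "Q8_dirs [False,False,True,True,True,True,True,True] = [5,2,7,0]"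
  "Q8_dirs [True,False,True,True,True,True,True,True] = [1,4,6,2]"
  "Q8_dirs [False,True,True,True,True,True,True,True] = [1,4,3,6]"
  "Q8_dirs [True,True,True,True,True,True,True,True] = [5,0,4,7]"
  by (simp_all add: Q8_dirs_def Q8_dir_table_def)

definition Q8_next :: "nat \<Rightarrow> bool list \<Rightarrow> bool list" where
  "Q8_next s v = flip_bit v (Q8_dirs v ! s)"

definition Q8_dirs_valid :: "bool list \<Rightarrow> bool" where
  "Q8_dirs_valid v \<longleftrightarrow>
     length (Q8_dirs v) = 4 \<and> distinct (Q8_dirs v) \<and> list_all (\<lambda>d. d < 8) (Q8_dirs v) \<and>
     list_all (\<lambda>s. Q8_dirs v ! s \<notin> set (Q8_dirs (Q8_next s v))) [0, 1, 2, 3] \<and>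
     list_all (\<lambda>d. d \<in> set (Q8_dirs v) \<or> d \<in> set (Q8_dirs (flip_bit v d))) [0, 1, 2, 3, 4, 5, 6, 7] \<and>
     distinct (map (walk Q8_next v) [0, 1, 2, 3, 4])"

lemma Q8_dirs_valid_all: "\<forall>v\<in>Q8_verts. Q8_dirs_valid v"
  unfolding Ball_Q8_verts
  by (simp add: n_lists_numeral Q8_dirs_valid_def Q8_dirs_table Q8_next_def flip_bit_def walk_numeral)

lemma Q8_dirs_valid_vertex: "v \<in> Q8_verts \<Longrightarrow> Q8_dirs_valid v"
  using Q8_dirs_valid_all by blast

lemma Q8_dirs_length: "v \<in> Q8_verts \<Longrightarrow> length (Q8_dirs v) = 4"
  using Q8_dirs_valid_vertex unfolding Q8_dirs_valid_def by blast

lemma Q8_dirs_distinct: "v \<in> Q8_verts \<Longrightarrow> distinct (Q8_dirs v)"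
  using Q8_dirs_valid_vertex unfolding Q8_dirs_valid_def by blast

lemma Q8_dirs_less: "v \<in> Q8_verts \<Longrightarrow> d \<in> set (Q8_dirs v) \<Longrightarrow> d < 8"
  using Q8_dirs_valid_vertex unfolding Q8_dirs_valid_def list_all_iff by blast

lemma Q8_dir_not_reversed:
  assumes "v \<in> Q8_verts" "s < 4"
  shows "Q8_dirs v ! s \<notin> set (Q8_dirs (Q8_next s v))"
proof -
  have "s \<in> set [0, 1, 2, 3]" using assms(2) by auto
  then show ?thesis
    using Q8_dirs_valid_vertex[OF assms(1)] unfolding Q8_dirs_valid_def list_all_iff by blast
qed

lemma Q8_dirs_cover:
  assumes "v \<in> Q8_verts" "d < 8"
  shows "d \<in> set (Q8_dirs v) \<or> d \<in> set (Q8_dirs (flip_bit v d))"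
proof -
  have "d \<in> set [0, 1, 2, 3, 4, 5, 6, 7]" using assms(2) by auto
  then show ?thesis
    using Q8_dirs_valid_vertex[OF assms(1)] unfolding Q8_dirs_valid_def list_all_iff by blast
qed

lemma Q8_walk_inj: "v \<in> Q8_verts \<Longrightarrow> inj_on (walk Q8_next v) {0..4}"
proof -
  assume "v \<in> Q8_verts"
  then have "distinct (map (walk Q8_next v) [0, 1, 2, 3, 4])"
    using Q8_dirs_valid_vertex unfolding Q8_dirs_valid_def by blast
  moreover have "set [0, 1, 2, 3, 4] = {0..4::nat}" by auto
  ultimately show ?thesis by (simp only: distinct_map)
qed

lemma Q8_next_in_verts: "v \<in> Q8_verts \<Longrightarrow> Q8_next s v \<in> Q8_verts"
  by (simp add: Q8_next_def Q8_verts_def)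

lemma Q8_dir_less: "v \<in> Q8_verts \<Longrightarrow> s < 4 \<Longrightarrow> Q8_dirs v ! s < 8"
  using Q8_dirs_less Q8_dirs_length nth_mem by metis

lemma Q8_adj_next: "s < 4 \<Longrightarrow> v \<in> Q8_verts \<Longrightarrow> Q8_adj v (Q8_next s v)"
  using Q8_dir_less by (auto simp: Q8_adj_iff_flip_bit Q8_next_def Q8_verts_def)

lemma Q8_arcs_inj:
  assumes "s < 4" "t < 4" "v \<in> Q8_verts" "w \<in> Q8_verts" "{v, Q8_next s v} = {w, Q8_next t w}"
  shows "v = w \<and> s = t"
proof -
  have len: "length v = 8" using assms(3) by (simp add: Q8_verts_def)
  have bounds: "Q8_dirs v ! s < length v" "Q8_dirs w ! t < length v"
    using Q8_dir_less assms(1-4) len by simp_all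
  consider "v = w" "Q8_next s v = Q8_next t w" | "v = Q8_next t w" "Q8_next s v = w"
    using assms(5) by (auto simp: doubleton_eq_iff)
  then show ?thesis
  proof cases
    case 1
    then have "flip_bit v (Q8_dirs v ! s) = flip_bit v (Q8_dirs w ! t)"
      by (simp add: Q8_next_def)
    then have "Q8_dirs v ! s = Q8_dirs v ! t"
      using flip_bit_inj[OF bounds] \<open>v = w\<close> by simp
    then show ?thesis
      using 1 Q8_dirs_distinct Q8_dirs_length assms by (simp add: nth_eq_iff_index_eq)
  next
    case 2
    have "flip_bit v (Q8_dirs w ! t) = w"
      using 2(1) by (simp add: Q8_next_def)
    also have "w = flip_bit v (Q8_dirs v ! s)"
      using 2(2) by (simp add: Q8_next_def)
    finally have "Q8_dirs v ! s = Q8_dirs w ! t"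
      using flip_bit_inj[OF bounds] by simp
    moreover have "Q8_dirs w ! t \<in> set (Q8_dirs (Q8_next s v))"
      using 2(2) Q8_dirs_length[OF assms(4)] assms(2) by simp
    ultimately show ?thesis
      using Q8_dir_not_reversed[OF assms(3,1)] by auto
  qed
qed

lemma Q8_arcs_cover: "(\<Union>s<4. arc_edges Q8_verts (Q8_next s)) = graph_edges Q8_verts Q8_adj"
proof (intro equalityI subsetI)
  fix e assume "e \<in> (\<Union>s<4. arc_edges Q8_verts (Q8_next s))"
  then obtain s v where "s < 4" "v \<in> Q8_verts" "e = {v, Q8_next s v}"
    by (auto simp: arc_edges_def)
  then show "e \<in> graph_edges Q8_verts Q8_adj"
    unfolding graph_edges_def using Q8_adj_next Q8_next_in_verts by blast
next
  fix e assume "e \<in> graph_edges Q8_verts Q8_adj"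
  then obtain v w where vw: "v \<in> Q8_verts" "w \<in> Q8_verts" "Q8_adj v w" "e = {v, w}"
    by (auto simp: graph_edges_def)
  then obtain d where d: "d < 8" "w = flip_bit v d"
    by (auto simp: Q8_adj_iff_flip_bit)
  have "\<exists>s<4. e = {v, Q8_next s v} \<or> e = {w, Q8_next s w}"
    using Q8_dirs_cover[OF vw(1) d(1)]
  proof
    assume "d \<in> set (Q8_dirs v)"
    then obtain s where "s < 4" "d = Q8_dirs v ! s"
      using Q8_dirs_length[OF vw(1)] by (auto simp: in_set_conv_nth)
    then show ?thesis using d vw(4) by (auto simp: Q8_next_def)
  next
    assume "d \<in> set (Q8_dirs (flip_bit v d))"
    then obtain s where "s < 4" "d = Q8_dirs w ! s"
      using d(2) Q8_dirs_length[OF vw(2)] by (auto simp: in_set_conv_nth)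
    then have "Q8_next s w = v" using d(2) by (simp add: Q8_next_def)
    then show ?thesis using \<open>s < 4\<close> vw(4) by auto
  qed
  then show "e \<in> (\<Union>s<4. arc_edges Q8_verts (Q8_next s))"
    using vw(1,2) by (auto simp: arc_edges_def)
qed

lemma Q8_next_returns_after:
  assumes "s < 4"
  shows "returns_after (Q8_next s) (replicate 8 False) (Q8_next s (replicate 8 False)) 255"
proof -
  have "s = 0 \<or> s = 1 \<or> s = 2 \<or> s = 3" using assms by auto
  moreover have "replicate 8 False = [False, False, False, False, False, False, False, False]"
    by (simp add: numeral_eq_Suc)
  ultimately show ?thesis
    by (elim disjE) (simp_all add: returns_after_numeral Q8_dirs_table Q8_next_def flip_bit_def)
qed

lemma hamiltonian_orbit_Q8_next:
  assumes "s < 4"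
  shows "hamiltonian_orbit Q8_verts (Q8_next s) (replicate 8 False)"
proof (rule hamiltonian_orbitI[where n = 255])
  show "replicate 8 False \<in> Q8_verts" by (simp add: Q8_verts_def)
  show "Q8_next s ` Q8_verts \<subseteq> Q8_verts" by (auto intro: Q8_next_in_verts)
  show "card Q8_verts = Suc 255" by (simp add: card_Q8_verts)
  show "returns_after (Q8_next s) (replicate 8 False) (Q8_next s (replicate 8 False)) 255"
    using assms by (rule Q8_next_returns_after)
qed

theorem lemma9:
  fixes k :: nat
  assumes "k \<le> 4"
  shows "\<exists>(p :: bool list \<Rightarrow> nat \<Rightarrow> bool list) (H :: nat \<Rightarrow> bool list set set).
    is_DVOP Q8_verts Q8_adj k p \<and>
    (\<forall>i < 4 - k. hamiltonian_cycle Q8_verts Q8_adj (H i)) \<and>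
    (\<forall>i < 4 - k. DVOP_edges Q8_verts k p \<inter> H i = {}) \<and>
    (\<forall>i < 4 - k. \<forall>j < 4 - k. i \<noteq> j \<longrightarrow> H i \<inter> H j = {}) \<and>
    DVOP_edges Q8_verts k p \<union> (\<Union>i < 4 - k. H i) = graph_edges Q8_verts Q8_adj"
  using finite_Q8_verts assms hamiltonian_orbit_Q8_next Q8_adj_next Q8_arcs_inj Q8_arcs_cover Q8_walk_inj
  by (rule DVOP_hamiltonian_decomposition)

end
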